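(* Let $I$ be an open interval with $a=\inf I$, $S$ a nonempty set, and $V$ a subgroup of $\mathrm{Homeo}^+(I)$ that acts freely on $I$. Suppose $F:I\to S$ satisfies $F=F\circ\psi$ for some non-identity $\psi\in V$. Then for every $\varphi\in V$: if there is $t\in I$ with $F(x)=F(\varphi(x))$ for all $x\in(a,t)$, then $F=F\circ\varphi$ on all of $I$.
   Context: $\mathrm{Homeo}^+(I)$ is the group of increasing homeomorphisms of $I$; $V$ acts freely on $I$ if no non-identity element of $V$ has a fixed point in $I$. *)

theory Defs
  imports "HOL-Analysis.Analysis" "HOL-Library.Extended_Real"
begin

definition open_interval :: "ereal \<Rightarrow> ereal \<Rightarrow> real set" where
  "open_interval a b = {x. a < ereal x \<and> ereal x < b}"

text \<open>Increasing homeomorphisms of I, represented extensionally: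
  functions real to real which are the identity outside I.\<close>
definition homeo_plus :: "real set \<Rightarrow> (real \<Rightarrow> real) set" where
  "homeo_plus I = {f. (\<exists>g. homeomorphism I I f g) \<and> strict_mono_on I f
                      \<and> (\<forall>x. x \<notin> I \<longrightarrow> f x = x)}"

definition subgroup_homeo_plus :: "real set \<Rightarrow> (real \<Rightarrow> real) set \<Rightarrow> bool" where
  "subgroup_homeo_plus I V \<longleftrightarrow> V \<subseteq> homeo_plus I \<and> id \<in> V
     \<and> (\<forall>f\<in>V. \<forall>g\<in>V. f \<circ> g \<in> V) \<and> (\<forall>f\<in>V. inv f \<in> V)"

definition acts_freely :: "real set \<Rightarrow> (real \<Rightarrow> real) set \<Rightarrow> bool" where
  "acts_freely I V \<longleftrightarrow> (\<forall>f\<in>V. f \<noteq> id \<longrightarrow> (\<forall>x\<in>I. f x \<noteq> x))"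

end

theory Submission
  imports Defs
begin

(* Hoelder's theorem: a group V of increasing homeomorphisms acting freely on an interval is
   abelian. By freeness and the intermediate value theorem every non-identity element moves all
   points in the same direction, so V is totally ordered pointwise and two elements are already
   compared at a single point; continuity makes the order archimedean. If f, g >= id and fg < gf,
   then c = (fg)^-1 gf > id. If some element lies strictly between id and c, there is d > id with
   d^2 <= c, and bracketing f and g between consecutive powers of d gives c < d^2; otherwise c is
   the least element above id, so f and g are powers of c and commute.

   For the theorem, replacing psi by its inverse if necessary gives e > id in V with F o e = F.
   The e-orbit of t is unbounded above, so every x equals e^n u for some u < t, and since phi
   commutes with e^n,  F (phi x) = F (e^n (phi u)) = F (phi u) = F u = F (e^n u) = F x. *)

lemma homeo_plus_maps_to: "f \<in> homeo_plus J \<Longrightarrow> x \<in> J \<Longrightarrow> f x \<in> J"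
  unfolding homeo_plus_def homeomorphism_def by blast

lemma homeo_plus_continuous_on: "f \<in> homeo_plus J \<Longrightarrow> continuous_on J f"
  unfolding homeo_plus_def homeomorphism_def by blast

lemma homeo_plus_less_iff:
  "f \<in> homeo_plus J \<Longrightarrow> x \<in> J \<Longrightarrow> y \<in> J \<Longrightarrow> f x < f y \<longleftrightarrow> x < y"
  unfolding homeo_plus_def by (metis (no_types, lifting) mem_Collect_eq strict_mono_on_less)

lemma homeo_plus_bij:
  assumes "f \<in> homeo_plus J"
  shows "bij f"
proof -
  have "bij_betw f J J"
    using assms unfolding homeo_plus_def homeomorphism_def bij_betw_def
    by (blast intro: strict_mono_on_imp_inj_on)
  moreover have "bij_betw f (- J) (- J)"
    using assms bij_betw_cong[of "- J" f id "- J"] unfolding homeo_plus_def by auto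
  ultimately show ?thesis
    using bij_betw_combine[of f J J "- J" "- J"] by simp
qed

lemma orbit_unbounded_above:
  fixes e :: "real \<Rightarrow> real"
  assumes J: "is_interval J" and e: "continuous_on J e" "e ` J \<subseteq> J" "\<forall>x\<in>J. x < e x"
    and x: "x \<in> J" and y: "y \<in> J"
  shows "\<exists>n. y < (e ^^ n) x"
proof (rule ccontr)
  assume "\<nexists>n. y < (e ^^ n) x"
  then have bounded: "(e ^^ n) x \<le> y" for n
    by (simp add: not_less)
  define s where "s n = (e ^^ n) x" for n
  have s_mem: "s n \<in> J" for n
    unfolding s_def by (induction n) (use x e(2) in auto)
  have s_Suc: "s (Suc n) = e (s n)" for n
    unfolding s_def by simp
  have "incseq s"
    by (rule incseq_SucI) (simp add: s_Suc s_mem e(3) less_imp_le)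
  moreover have "bdd_above (range s)"
    using bounded unfolding s_def by (intro bdd_aboveI) auto
  ultimately have lim: "s \<longlonglongrightarrow> (SUP n. s n)"
    by (rule LIMSEQ_incseq_SUP[rotated])
  define L where "L = (SUP n. s n)"
  have "x \<le> L"
    using incseq_le[OF \<open>incseq s\<close> lim, of 0] unfolding s_def L_def by simp
  moreover have "L \<le> y"
    using LIMSEQ_le_const2[OF lim] bounded unfolding s_def L_def by blast
  ultimately have "L \<in> J"
    using J x y unfolding is_interval_1 by blast
  then have "(\<lambda>n. e (s n)) \<longlonglongrightarrow> e L"
    using e(1) s_mem lim unfolding continuous_on_sequentially comp_def L_def by blast
  moreover have "(\<lambda>n. e (s n)) \<longlonglongrightarrow> L"
    unfolding s_Suc[symmetric] L_def by (rule LIMSEQ_Suc[OF lim])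
  ultimately have "e L = L"
    by (rule LIMSEQ_unique)
  with \<open>L \<in> J\<close> e(3) show False
    by force
qed

lemma is_interval_open_interval: "is_interval (open_interval a b)"
  unfolding is_interval_1 open_interval_def
  by (metis (mono_tags, lifting) ereal_less_eq(3) le_less_trans less_le_trans mem_Collect_eq)

lemma open_interval_nonempty: "a < b \<Longrightarrow> open_interval a b \<noteq> {}"
  unfolding open_interval_def using ereal_dense2 by blast

locale free_homeo_group =
  fixes J :: "real set" and V :: "(real \<Rightarrow> real) set"
  assumes interval: "is_interval J" and nonempty: "J \<noteq> {}"
    and subgroup: "subgroup_homeo_plus J V" and free: "acts_freely J V"
begin

lemma id_mem: "id \<in> V"
  using subgroup unfolding subgroup_homeo_plus_def by blast

lemma comp_mem: "f \<in> V \<Longrightarrow> g \<in> V \<Longrightarrow> f \<circ> g \<in> V"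
  using subgroup unfolding subgroup_homeo_plus_def by blast

lemma inv_mem: "f \<in> V \<Longrightarrow> inv f \<in> V"
  using subgroup unfolding subgroup_homeo_plus_def by blast

lemma funpow_mem: "f \<in> V \<Longrightarrow> f ^^ n \<in> V"
  by (induction n) (simp_all add: id_mem comp_mem)

lemma homeo_plus: "f \<in> V \<Longrightarrow> f \<in> homeo_plus J"
  using subgroup unfolding subgroup_homeo_plus_def by blast

lemma maps_to: "f \<in> V \<Longrightarrow> x \<in> J \<Longrightarrow> f x \<in> J"
  by (rule homeo_plus_maps_to[OF homeo_plus])

lemma less_iff: "f \<in> V \<Longrightarrow> x \<in> J \<Longrightarrow> y \<in> J \<Longrightarrow> f x < f y \<longleftrightarrow> x < y"
  by (rule homeo_plus_less_iff[OF homeo_plus])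

lemma le_iff: "f \<in> V \<Longrightarrow> x \<in> J \<Longrightarrow> y \<in> J \<Longrightarrow> f x \<le> f y \<longleftrightarrow> x \<le> y"
  using less_iff by (meson not_less)

lemma apply_inv: "f \<in> V \<Longrightarrow> f (inv f x) = x"
  by (meson bij_is_surj homeo_plus homeo_plus_bij surj_f_inv_f)

lemma inv_apply: "f \<in> V \<Longrightarrow> inv f (f x) = x"
  by (meson bij_is_inj homeo_plus homeo_plus_bij inv_f_f)

lemma inv_less_iff: "f \<in> V \<Longrightarrow> x \<in> J \<Longrightarrow> y \<in> J \<Longrightarrow> inv f x < y \<longleftrightarrow> x < f y"
  by (metis apply_inv inv_mem less_iff maps_to)

lemma less_inv_iff: "f \<in> V \<Longrightarrow> x \<in> J \<Longrightarrow> y \<in> J \<Longrightarrow> x < inv f y \<longleftrightarrow> f x < y"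
  by (metis apply_inv inv_mem less_iff maps_to)

lemma inv_le_iff: "f \<in> V \<Longrightarrow> x \<in> J \<Longrightarrow> y \<in> J \<Longrightarrow> x \<le> inv f y \<longleftrightarrow> f x \<le> y"
  using inv_less_iff by (meson not_less)

lemma displacement_sign:
  assumes "f \<in> V"
  shows "f = id \<or> (\<forall>x\<in>J. x < f x) \<or> (\<forall>x\<in>J. f x < x)"
proof (rule ccontr)
  assume "\<not> ?thesis"
  then obtain x y where "x \<in> J" "f x - x \<le> 0" "y \<in> J" "0 \<le> f y - y" "f \<noteq> id"
    by (auto simp: not_less)
  moreover have "is_interval ((\<lambda>z. f z - z) ` J)"
    using assms interval homeo_plus_continuous_on[OF homeo_plus]
    by (simp add: is_interval_connected_1 connected_continuous_image continuous_on_diff)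
  ultimately have "0 \<in> (\<lambda>z. f z - z) ` J"
    unfolding is_interval_1 by blast
  with \<open>f \<noteq> id\<close> free assms show False
    unfolding acts_freely_def by auto
qed

lemma eq_if_eq_at:
  assumes "f \<in> V" "g \<in> V" "x \<in> J" "f x = g x"
  shows "f = g"
proof -
  have "inv g \<circ> f \<in> V" "(inv g \<circ> f) x = x"
    using assms by (simp_all add: comp_mem inv_mem inv_apply)
  then have "inv g \<circ> f = id"
    using free \<open>x \<in> J\<close> unfolding acts_freely_def by blast
  then show "f = g"
    by (metis apply_inv assms(2) comp_apply ext id_apply)
qed

lemma less_on_if_less_at:
  assumes f: "f \<in> V" and g: "g \<in> V" and "x \<in> J" "f x < g x" "y \<in> J"
  shows "f y < g y"
proof -
  define h where "h = inv g \<circ> f"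
  have h: "h \<in> V"
    unfolding h_def using f g by (simp add: comp_mem inv_mem)
  have "h x < x"
    unfolding h_def using assms by (simp add: inv_less_iff maps_to)
  then have "\<forall>z\<in>J. h z < z"
    using displacement_sign[OF h] \<open>x \<in> J\<close> by fastforce
  then show "f y < g y"
    unfolding h_def using assms by (simp add: inv_less_iff maps_to)
qed

lemma le_on_if_le_at:
  "f \<in> V \<Longrightarrow> g \<in> V \<Longrightarrow> x \<in> J \<Longrightarrow> f x \<le> g x \<Longrightarrow> y \<in> J \<Longrightarrow> f y \<le> g y"
  by (meson less_on_if_less_at not_less)

lemma funpow_unbounded:
  "e \<in> V \<Longrightarrow> \<forall>x\<in>J. x < e x \<Longrightarrow> x \<in> J \<Longrightarrow> y \<in> J \<Longrightarrow> \<exists>n. y < (e ^^ n) x"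
  by (rule orbit_unbounded_above[OF interval homeo_plus_continuous_on[OF homeo_plus]])
    (auto simp: maps_to)

lemma funpow_bracket:
  assumes d: "d \<in> V" "\<forall>x\<in>J. x < d x" and f: "f \<in> V" "\<forall>x\<in>J. x \<le> f x"
  shows "\<exists>n. \<forall>x\<in>J. (d ^^ n) x \<le> f x \<and> f x < (d ^^ Suc n) x"
proof -
  obtain x where x: "x \<in> J"
    using nonempty by blast
  have "\<exists>n. f x < (d ^^ n) x"
    using funpow_unbounded[OF d x maps_to[OF f(1) x]] .
  moreover have "\<not> f x < (d ^^ 0) x"
    using f(2) x by (simp add: not_less)
  ultimately obtain n where "(d ^^ n) x \<le> f x" "f x < (d ^^ Suc n) x"
    using exists_least_lemma[of "\<lambda>n. f x < (d ^^ n) x"] by (auto simp: not_less)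
  then show ?thesis
    using x le_on_if_le_at[OF funpow_mem[OF d(1)] f(1)] less_on_if_less_at[OF f(1) funpow_mem[OF d(1)]]
    by blast
qed

lemma exists_square_le:
  assumes c: "c \<in> V" and e: "e \<in> V" "\<forall>x\<in>J. x < e x" "\<forall>x\<in>J. e x < c x"
  shows "\<exists>d\<in>V. (\<forall>x\<in>J. x < d x) \<and> (\<forall>x\<in>J. d (d x) \<le> c x)"
proof (cases "\<forall>x\<in>J. e (e x) \<le> c x")
  case True
  with e show ?thesis
    by blast
next
  case False
  \<comment> \<open>now \<open>c < e\<^sup>2\<close>, so \<open>d = e\<^sup>-\<^sup>1 c\<close> satisfies \<open>id < d < e\<close> and hence \<open>d\<^sup>2 < e d = c\<close>\<close>
  then obtain x0 where x0: "x0 \<in> J" "c x0 < (e \<circ> e) x0"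
    by (auto simp: not_le)
  have c_less: "c x < e (e x)" if "x \<in> J" for x
    using less_on_if_less_at[OF c comp_mem[OF e(1) e(1)] x0 that] by simp
  define d where "d = inv e \<circ> c"
  have d: "d \<in> V"
    unfolding d_def using c e(1) by (simp add: comp_mem inv_mem)
  have e_d: "e (d x) = c x" for x
    unfolding d_def using e(1) by (simp add: apply_inv)
  have d_less_e: "d x < e x" if "x \<in> J" for x
  proof -
    have "e (d x) < e (e x)"
      using c_less that e_d by simp
    then show ?thesis
      using less_iff[OF e(1) maps_to[OF d that] maps_to[OF e(1) that]] by simp
  qed
  have "x < d x" if "x \<in> J" for x
  proof -
    have "e x < e (d x)"
      using e(3) that e_d by simp
    then show ?thesis
      using less_iff[OF e(1) that maps_to[OF d that]] by simp
  qed
  moreover have "d (d x) \<le> c x" if "x \<in> J" for x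
    using d_less_e[OF maps_to[OF d that]] e_d[of x] by simp
  ultimately show ?thesis
    using d by blast
qed

lemma eq_funpow_of_least_positive:
  assumes c: "c \<in> V" "\<forall>x\<in>J. x < c x"
    and least: "\<not> (\<exists>e\<in>V. (\<forall>x\<in>J. x < e x) \<and> (\<forall>x\<in>J. e x < c x))"
    and f: "f \<in> V" "\<forall>x\<in>J. x \<le> f x"
  shows "\<exists>n. f = c ^^ n"
proof -
  obtain n where n: "\<forall>x\<in>J. (c ^^ n) x \<le> f x \<and> f x < (c ^^ Suc n) x"
    using funpow_bracket[OF c f] by blast
  define h where "h = inv (c ^^ n) \<circ> f"
  have h: "h \<in> V"
    unfolding h_def using c f by (simp add: comp_mem inv_mem funpow_mem)
  have cn: "c ^^ n \<in> V"
    using c(1) by (rule funpow_mem)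
  have h_ge: "x \<le> h x" if "x \<in> J" for x
    unfolding h_def using n that inv_le_iff[OF cn that maps_to[OF f(1) that]] by simp
  have h_less: "h x < c x" if "x \<in> J" for x
  proof -
    have "f x < (c ^^ n) (c x)"
      using n that by (simp add: funpow_swap1)
    then show ?thesis
      unfolding h_def using inv_less_iff[OF cn maps_to[OF f(1) that] maps_to[OF c(1) that]] by simp
  qed
  have "h = id"
  proof -
    obtain x where "x \<in> J"
      using nonempty by blast
    then have "\<not> (\<forall>x\<in>J. h x < x)"
      using h_ge by (meson not_le)
    moreover have "\<not> (\<forall>x\<in>J. x < h x)"
      using least h h_less by blast
    ultimately show ?thesis
      using displacement_sign[OF h] by blast
  qed
  then have "f x = (c ^^ n) x" for x
    using apply_inv[OF cn, of "f x"] unfolding h_def by (metis comp_apply id_apply)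
  then show ?thesis
    by blast
qed

lemma no_positive_commutator:
  assumes f: "f \<in> V" "\<forall>x\<in>J. x \<le> f x" and g: "g \<in> V" "\<forall>x\<in>J. x \<le> g x"
    and less: "\<forall>x\<in>J. f (g x) < g (f x)"
  shows False
proof -
  define c where "c = inv (f \<circ> g) \<circ> (g \<circ> f)"
  have fg: "f \<circ> g \<in> V" "g \<circ> f \<in> V"
    using f g by (simp_all add: comp_mem)
  have c: "c \<in> V"
    unfolding c_def using fg by (simp add: comp_mem inv_mem)
  have fg_c: "f (g (c x)) = g (f x)" for x
    unfolding c_def using apply_inv[OF fg(1)] by simp
  have c_pos: "\<forall>x\<in>J. x < c x"
    unfolding c_def using less less_inv_iff[OF fg(1)] maps_to[OF fg(2)] by simp
  obtain x where x: "x \<in> J"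
    using nonempty by blast
  show False
  proof (cases "\<exists>e\<in>V. (\<forall>x\<in>J. x < e x) \<and> (\<forall>x\<in>J. e x < c x)")
    case True
    then obtain d where d: "d \<in> V" "\<forall>x\<in>J. x < d x" "\<forall>x\<in>J. d (d x) \<le> c x"
      using exists_square_le[OF c] by blast
    obtain m where m: "\<forall>x\<in>J. (d ^^ m) x \<le> f x \<and> f x < (d ^^ Suc m) x"
      using funpow_bracket[OF d(1,2) f] by blast
    obtain k where k: "\<forall>x\<in>J. (d ^^ k) x \<le> g x \<and> g x < (d ^^ Suc k) x"
      using funpow_bracket[OF d(1,2) g] by blast
    have dmk: "d ^^ (m + k) \<in> V" "d ^^ m \<in> V" "d ^^ Suc k \<in> V"
      using d(1) by (simp_all only: funpow_mem)
    have in_J: "c x \<in> J" "g (c x) \<in> J" "d (d x) \<in> J" "f x \<in> J" "(d ^^ Suc m) x \<in> J"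
      using x c d(1) f(1) g(1) dmk by (simp_all add: maps_to funpow_mem)
    have "(d ^^ (m + k)) (d (d x)) \<le> (d ^^ (m + k)) (c x)"
      using d(3) x le_iff[OF dmk(1) in_J(3,1)] by simp
    also have "\<dots> = (d ^^ m) ((d ^^ k) (c x))"
      by (simp add: funpow_add)
    also have "\<dots> \<le> (d ^^ m) (g (c x))"
      using k in_J(1) le_iff[OF dmk(2) maps_to[OF funpow_mem[OF d(1)] in_J(1)] in_J(2)] by simp
    also have "\<dots> \<le> f (g (c x))"
      using m in_J(2) by simp
    also have "\<dots> = g (f x)"
      by (rule fg_c)
    also have "\<dots> < (d ^^ Suc k) (f x)"
      using k in_J(4) by simp
    also have "\<dots> < (d ^^ Suc k) ((d ^^ Suc m) x)"
      using m x less_iff[OF dmk(3) in_J(4,5)] by simp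
    also have "\<dots> = (d ^^ (m + k)) (d (d x))"
      by (simp add: funpow_add funpow_swap1 add.commute[of m k])
    finally show False
      by simp
  next
    case False
    then obtain m k where "f = c ^^ m" "g = c ^^ k"
      using eq_funpow_of_least_positive[OF c c_pos] f g by blast
    then have "f \<circ> g = g \<circ> f"
      by (simp add: funpow_add[symmetric] add.commute)
    then show False
      using less x by (metis comp_apply less_irrefl)
  qed
qed

lemma commute_of_ge_id:
  assumes "f \<in> V" "\<forall>x\<in>J. x \<le> f x" "g \<in> V" "\<forall>x\<in>J. x \<le> g x"
  shows "f \<circ> g = g \<circ> f"
proof (rule ccontr)
  assume ne: "f \<circ> g \<noteq> g \<circ> f"
  obtain x where x: "x \<in> J"
    using nonempty by blast
  have fg: "f \<circ> g \<in> V" "g \<circ> f \<in> V"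
    using assms by (simp_all add: comp_mem)
  have "(f \<circ> g) x \<noteq> (g \<circ> f) x"
    using eq_if_eq_at[OF fg x] ne by blast
  then consider "(f \<circ> g) x < (g \<circ> f) x" | "(g \<circ> f) x < (f \<circ> g) x"
    by linarith
  then show False
  proof cases
    case 1
    then show False
      using no_positive_commutator[OF assms] less_on_if_less_at[OF fg x] by simp
  next
    case 2
    then show False
      using no_positive_commutator[OF assms(3,4,1,2)] less_on_if_less_at[OF fg(2,1) x] by simp
  qed
qed

lemma ge_id_or_inv_ge_id:
  assumes "f \<in> V"
  shows "(\<forall>x\<in>J. x \<le> f x) \<or> (\<forall>x\<in>J. x \<le> inv f x)"
  using displacement_sign[OF assms]
proof (elim disjE)
  assume "\<forall>x\<in>J. f x < x"
  then show ?thesis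
    using less_inv_iff[OF assms] by (simp add: less_imp_le)
qed (auto simp: less_imp_le)

lemma inv_commute:
  assumes "f \<in> V" "f \<circ> g = g \<circ> f"
  shows "inv f \<circ> g = g \<circ> inv f"
proof (rule ext)
  fix x
  have "inv f (g x) = inv f (g (f (inv f x)))"
    using apply_inv[OF assms(1)] by simp
  also have "\<dots> = inv f (f (g (inv f x)))"
    using fun_cong[OF assms(2), of "inv f x"] by simp
  also have "\<dots> = g (inv f x)"
    using inv_apply[OF assms(1)] by simp
  finally show "(inv f \<circ> g) x = (g \<circ> inv f) x"
    by simp
qed

theorem commute:
  assumes "f \<in> V" "g \<in> V"
  shows "f \<circ> g = g \<circ> f"
proof -
  have commute_ge_id: "f \<circ> g = g \<circ> f" if "f \<in> V" "g \<in> V" "\<forall>x\<in>J. x \<le> g x" for f g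
    using ge_id_or_inv_ge_id[OF \<open>f \<in> V\<close>]
  proof
    assume "\<forall>x\<in>J. x \<le> inv f x"
    then have "inv f \<circ> g = g \<circ> inv f"
      using commute_of_ge_id inv_mem that by blast
    then show ?thesis
      using inv_commute[OF inv_mem[OF \<open>f \<in> V\<close>]] homeo_plus_bij[OF homeo_plus[OF \<open>f \<in> V\<close>]]
      by (simp add: inv_inv_eq)
  qed (use commute_of_ge_id that in blast)
  show ?thesis
    using ge_id_or_inv_ge_id[OF \<open>g \<in> V\<close>]
  proof
    assume "\<forall>x\<in>J. x \<le> inv g x"
    then have "inv g \<circ> f = f \<circ> inv g"
      using commute_ge_id assms inv_mem by metis
    then show ?thesis
      using inv_commute[OF inv_mem[OF \<open>g \<in> V\<close>]] homeo_plus_bij[OF homeo_plus[OF \<open>g \<in> V\<close>]]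
      by (simp add: inv_inv_eq)
  qed (use commute_ge_id assms in blast)
qed

lemma invariant_funpow:
  "e \<in> V \<Longrightarrow> \<forall>x\<in>J. F (e x) = F x \<Longrightarrow> x \<in> J \<Longrightarrow> F ((e ^^ n) x) = F x"
  by (induction n) (simp_all add: maps_to funpow_mem)

lemma exists_increasing_invariant:
  assumes "\<psi> \<in> V" "\<psi> \<noteq> id" "\<forall>x\<in>J. F (\<psi> x) = F x"
  shows "\<exists>e\<in>V. (\<forall>x\<in>J. x < e x) \<and> (\<forall>x\<in>J. F (e x) = F x)"
  using displacement_sign[OF assms(1)]
proof (elim disjE)
  assume "\<forall>x\<in>J. \<psi> x < x"
  then have "\<forall>x\<in>J. x < inv \<psi> x"
    using less_inv_iff[OF assms(1)] by simp
  moreover have "\<forall>x\<in>J. F (inv \<psi> x) = F x"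
    using assms(3) maps_to[OF inv_mem[OF assms(1)]] apply_inv[OF assms(1)] by metis
  ultimately show ?thesis
    using inv_mem[OF assms(1)] by blast
qed (use assms in blast)+

lemma invariant_if_invariant_near_inf:
  assumes e: "e \<in> V" "\<forall>x\<in>J. x < e x" "\<forall>x\<in>J. F (e x) = F x"
    and \<phi>: "\<phi> \<in> V" and t: "t \<in> J" and near_inf: "\<forall>x\<in>J. x < t \<longrightarrow> F (\<phi> x) = F x"
    and x: "x \<in> J"
  shows "F (\<phi> x) = F x"
proof -
  obtain n where "x < (e ^^ n) t"
    using funpow_unbounded[OF e(1,2) t x] by blast
  define E where "E = e ^^ n"
  define u where "u = inv E x"
  have E: "E \<in> V"
    unfolding E_def using e(1) by (rule funpow_mem)
  have u: "u \<in> J" "E u = x"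
    unfolding u_def using E x by (simp_all add: apply_inv maps_to inv_mem)
  have "u < t"
    unfolding u_def using inv_less_iff[OF E x t] \<open>x < (e ^^ n) t\<close> E_def by simp
  have F_E: "F (E y) = F y" if "y \<in> J" for y
    unfolding E_def using invariant_funpow[OF e(1,3) that] .
  have "F (\<phi> x) = F (E (\<phi> u))"
    using commute[OF \<phi> E] u by (metis comp_apply)
  also have "\<dots> = F (\<phi> u)"
    using F_E maps_to[OF \<phi> u(1)] .
  also have "\<dots> = F u"
    using near_inf u(1) \<open>u < t\<close> by blast
  also have "\<dots> = F x"
    using F_E[OF u(1)] u(2) by simp
  finally show ?thesis .
qed

end

theorem lemma3p2:
  fixes a b :: ereal and S :: "'s set" and V :: "(real \<Rightarrow> real) set"
    and F :: "real \<Rightarrow> 's" and \<psi> \<phi> :: "real \<Rightarrow> real" and t :: real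
  assumes "a < b"
    and "S \<noteq> {}"
    and "subgroup_homeo_plus (open_interval a b) V"
    and "acts_freely (open_interval a b) V"
    and "\<forall>x\<in>open_interval a b. F x \<in> S"
    and "\<psi> \<in> V" and "\<psi> \<noteq> id"
    and "\<forall>x\<in>open_interval a b. F x = F (\<psi> x)"
    and "\<phi> \<in> V"
    and "t \<in> open_interval a b"
    and "\<forall>x. a < ereal x \<and> x < t \<longrightarrow> F x = F (\<phi> x)"
  shows "\<forall>x\<in>open_interval a b. F x = F (\<phi> x)"
proof -
  interpret free_homeo_group "open_interval a b" V
    using assms(1,3,4) is_interval_open_interval open_interval_nonempty
    by unfold_locales
  have "\<forall>x\<in>open_interval a b. F (\<psi> x) = F x"
    using assms(8) by simp
  then obtain e where e: "e \<in> V" "\<forall>x\<in>open_interval a b. x < e x"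
    "\<forall>x\<in>open_interval a b. F (e x) = F x"
    using exists_increasing_invariant[OF assms(6,7)] by blast
  have near_inf: "\<forall>x\<in>open_interval a b. x < t \<longrightarrow> F (\<phi> x) = F x"
    using assms(11) unfolding open_interval_def by simp
  show ?thesis
    using invariant_if_invariant_near_inf[OF e assms(9,10) near_inf] by simp
qed

end
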